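(* Let $1\le t\le k$, $d\ge k+1$ and $0<\beta\le1/2$. Let $X\in\mathbb{R}^{t\times t}$ be a symmetric matrix and $Z\in\mathbb{R}^t$ a vector with $|X_{ij}|\le\frac{\beta}{t+1}$ for all $i,j\in[t]$ and $|Z_i|\le\frac{\beta}{t+1}$ for all $i\in[t]$. Then there exist $y_1,\dots,y_t\in[-1,1]^d$ such that $X_{ij}=\langle y_i,y_j\rangle$ for $i\ne j$, $X_{ii}=\langle y_i,y_i\rangle-\beta$, and $Z_i=\langle y_i,\mathbf 1\rangle$ for all $i,j\in[t]$, where $\mathbf 1=(1,\dots,1)\in\mathbb{R}^d$. *)

theory Defs
  imports Complex_Main
begin

end

theory Submission
  imports Defs
begin

(* The (t+1) x (t+1) matrix with first row and column (1/d, Z/d) and lower block X + beta I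
   is strictly diagonally dominant, by the size bounds on X and Z. Strict diagonal dominance
   survives passing to a Schur complement, so the Cholesky recursion writes this matrix as the
   Gram matrix of vectors in R^(t+1) whose first vector is a multiple of e_0. Sending e_0, ..., e_t
   to the first t+1 rows of the Helmert matrix, an orthonormal system in R^d whose first vector is
   the constant 1/sqrt d, realises the matrix in R^d with first vector the constant 1/d; the other
   vectors are the y_i, and |y_il|^2 <= |y_i|^2 = X_ii + beta <= 1. *)

definition dot :: "nat \<Rightarrow> (nat \<Rightarrow> real) \<Rightarrow> (nat \<Rightarrow> real) \<Rightarrow> real" where
  "dot n u v = (\<Sum>l<n. u l * v l)"

definition symmetric_matrix :: "nat \<Rightarrow> (nat \<Rightarrow> nat \<Rightarrow> real) \<Rightarrow> bool" where
  "symmetric_matrix n A \<longleftrightarrow> (\<forall>i<n. \<forall>j<n. A i j = A j i)"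

definition strictly_diagonally_dominant :: "nat \<Rightarrow> (nat \<Rightarrow> nat \<Rightarrow> real) \<Rightarrow> bool" where
  "strictly_diagonally_dominant n A \<longleftrightarrow> (\<forall>i<n. (\<Sum>j\<in>{..<n} - {i}. \<bar>A i j\<bar>) < A i i)"

definition bordered ::
    "'a \<Rightarrow> (nat \<Rightarrow> 'a) \<Rightarrow> (nat \<Rightarrow> 'a) \<Rightarrow> (nat \<Rightarrow> nat \<Rightarrow> 'a) \<Rightarrow> nat \<Rightarrow> nat \<Rightarrow> 'a" where
  "bordered a r c B i j =
     (case i of
        0 \<Rightarrow> (case j of 0 \<Rightarrow> a | Suc j' \<Rightarrow> r j')
      | Suc i' \<Rightarrow> (case j of 0 \<Rightarrow> c i' | Suc j' \<Rightarrow> B i' j'))"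

lemma bordered_simps [simp]:
  "bordered a r c B 0 0 = a" "bordered a r c B 0 (Suc j) = r j"
  "bordered a r c B (Suc i) 0 = c i" "bordered a r c B (Suc i) (Suc j) = B i j"
  by (simp_all add: bordered_def)

lemma dot_Suc_shift: "dot (Suc n) u v = u 0 * v 0 + dot n (\<lambda>l. u (Suc l)) (\<lambda>l. v (Suc l))"
  unfolding dot_def by (rule sum.lessThan_Suc_shift)

lemma dot_zero_left [simp]: "dot n (\<lambda>_. 0) v = 0"
  and dot_zero_right [simp]: "dot n u (\<lambda>_. 0) = 0"
  by (simp_all add: dot_def)

lemma dot_commute: "dot n u v = dot n v u"
  unfolding dot_def by (simp add: mult.commute)

lemma symmetric_matrix_bordered:
  assumes "symmetric_matrix n B"
  shows "symmetric_matrix (Suc n) (bordered a c c B)"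
  using assms unfolding symmetric_matrix_def bordered_def by (auto split: nat.split)

lemma abs_le_one_if_dot_self_le_one:
  assumes "dot d u u \<le> 1" "l < d"
  shows "\<bar>u l\<bar> \<le> 1"
proof -
  have "(u l)\<^sup>2 \<le> dot d u u"
    unfolding dot_def power2_eq_square using assms(2)
    by (intro member_le_sum[where f = "\<lambda>l. u l * u l"]) auto
  with assms(1) have "(u l)\<^sup>2 \<le> 1" by linarith
  then show ?thesis by (simp add: abs_square_le_1)
qed

lemma sum_remove_Suc_shift:
  fixes f :: "nat \<Rightarrow> 'a::comm_monoid_add"
  shows "(\<Sum>j\<in>{..<Suc n} - {Suc i}. f j) = f 0 + (\<Sum>j\<in>{..<n} - {i}. f (Suc j))"
proof -
  have "{..<Suc n} - {Suc i} = insert 0 (Suc ` ({..<n} - {i}))"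
    by (auto simp: lessThan_Suc_eq_insert_0 image_iff)
  then show ?thesis by (simp add: sum.reindex)
qed

lemma sum_remove_0_shift:
  fixes f :: "nat \<Rightarrow> 'a::comm_monoid_add"
  shows "(\<Sum>j\<in>{..<Suc n} - {0}. f j) = (\<Sum>j<n. f (Suc j))"
  by (simp add: lessThan_Suc_eq_insert_0 sum.reindex)

lemma strictly_diagonally_dominant_diag_pos:
  assumes "strictly_diagonally_dominant n A" "i < n"
  shows "0 < A i i"
proof -
  have "0 \<le> (\<Sum>j\<in>{..<n} - {i}. \<bar>A i j\<bar>)" by (rule sum_nonneg) simp
  moreover have "(\<Sum>j\<in>{..<n} - {i}. \<bar>A i j\<bar>) < A i i"
    using assms unfolding strictly_diagonally_dominant_def by blast
  ultimately show ?thesis by linarith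
qed

lemma strictly_diagonally_dominant_schur_complement:
  assumes sym: "symmetric_matrix (Suc n) A" and dom: "strictly_diagonally_dominant (Suc n) A"
  shows "strictly_diagonally_dominant n (\<lambda>i j. A (Suc i) (Suc j) - A 0 (Suc i) * A 0 (Suc j) / A 0 0)"
  unfolding strictly_diagonally_dominant_def
proof (intro allI impI)
  fix i assume i: "i < n"
  define a where "a = A 0 0"
  define c where "c j = A 0 (Suc j)" for j
  define R where "R = (\<Sum>j\<in>{..<n} - {i}. \<bar>A (Suc i) (Suc j)\<bar>)"
  have a_pos: "0 < a"
    using strictly_diagonally_dominant_diag_pos[OF dom] by (simp add: a_def)
  have row0: "(\<Sum>j<n. \<bar>c j\<bar>) < a"
    using dom sum_remove_0_shift[where f="\<lambda>j. \<bar>A 0 j\<bar>"]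
    unfolding strictly_diagonally_dominant_def a_def c_def by fastforce
  have "A (Suc i) 0 = c i" using sym i unfolding symmetric_matrix_def c_def by simp
  then have rowi: "\<bar>c i\<bar> + R < A (Suc i) (Suc i)"
    using dom i sum_remove_Suc_shift[where f="\<lambda>j. \<bar>A (Suc i) j\<bar>"]
    unfolding strictly_diagonally_dominant_def R_def by fastforce
  have "(\<Sum>j\<in>{..<n} - {i}. \<bar>A (Suc i) (Suc j) - c i * c j / a\<bar>)
      \<le> (\<Sum>j\<in>{..<n} - {i}. \<bar>A (Suc i) (Suc j)\<bar> + \<bar>c i\<bar> / a * \<bar>c j\<bar>)"
    using a_pos by (intro sum_mono) (simp add: abs_mult order.trans[OF abs_triangle_ineq4])
  also have "\<dots> = R + \<bar>c i\<bar> / a * (\<Sum>j\<in>{..<n} - {i}. \<bar>c j\<bar>)"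
    by (simp add: R_def sum.distrib sum_distrib_left)
  also have "\<dots> = R + \<bar>c i\<bar> / a * ((\<Sum>j<n. \<bar>c j\<bar>) - \<bar>c i\<bar>)"
    using i by (simp add: sum_diff1)
  also have "\<dots> \<le> R + \<bar>c i\<bar> / a * (a - \<bar>c i\<bar>)"
    using row0 a_pos by (intro add_left_mono mult_left_mono) auto
  also have "\<dots> = R + \<bar>c i\<bar> - c i * c i / a"
    using a_pos by (simp add: field_simps abs_mult_self_eq)
  also have "\<dots> < A (Suc i) (Suc i) - c i * c i / a"
    using rowi by simp
  finally show "(\<Sum>j\<in>{..<n} - {i}. \<bar>A (Suc i) (Suc j) - A 0 (Suc i) * A 0 (Suc j) / A 0 0\<bar>)
      < A (Suc i) (Suc i) - A 0 (Suc i) * A 0 (Suc i) / A 0 0"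
    by (simp add: a_def c_def)
qed

lemma strictly_diagonally_dominant_gram_factor:
  assumes "symmetric_matrix n A" "strictly_diagonally_dominant n A"
  shows "\<exists>L. (\<forall>i<n. \<forall>j<n. dot n (L i) (L j) = A i j) \<and>
              L 0 0 = sqrt (A 0 0) \<and> (\<forall>k>0. L 0 k = 0)"
  using assms
proof (induction n arbitrary: A)
  case 0
  show ?case by (rule exI[of _ "\<lambda>i k. if k = 0 then sqrt (A 0 0) else 0"]) simp
next
  case (Suc n)
  define a where "a = A 0 0"
  define S where "S = (\<lambda>i j. A (Suc i) (Suc j) - A 0 (Suc i) * A 0 (Suc j) / a)"
  have a_pos: "0 < a"
    using strictly_diagonally_dominant_diag_pos[OF Suc.prems(2)] by (simp add: a_def)
  then have sqrt_a: "sqrt a * sqrt a = a" "sqrt a \<noteq> 0" by simp_all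
  have "symmetric_matrix n S"
    using Suc.prems(1) unfolding symmetric_matrix_def S_def by (auto simp: mult.commute)
  moreover have "strictly_diagonally_dominant n S"
    using strictly_diagonally_dominant_schur_complement[OF Suc.prems] by (simp add: S_def a_def)
  ultimately obtain L' where L': "\<forall>i<n. \<forall>j<n. dot n (L' i) (L' j) = S i j"
    using Suc.IH by blast
  define L where "L = bordered (sqrt a) (\<lambda>_. 0) (\<lambda>i. A 0 (Suc i) / sqrt a) L'"
  have gram: "dot (Suc n) (L i) (L j) = A i j" if "i < Suc n" "j < Suc n" for i j
  proof (cases i; cases j)
    assume "i = 0" "j = 0"
    then show ?thesis using sqrt_a by (simp add: L_def dot_Suc_shift a_def)
  next
    fix j' assume "i = 0" "j = Suc j'"
    then show ?thesis using sqrt_a by (simp add: L_def dot_Suc_shift)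
  next
    fix i' assume "i = Suc i'" "j = 0"
    then show ?thesis
      using sqrt_a that Suc.prems(1) by (simp add: L_def dot_Suc_shift symmetric_matrix_def)
  next
    fix i' j' assume "i = Suc i'" "j = Suc j'"
    then have "i' < n" "j' < n" using that by simp_all
    have "dot (Suc n) (L i) (L j) = A 0 (Suc i') / sqrt a * (A 0 (Suc j') / sqrt a) + dot n (L' i') (L' j')"
      using \<open>i = Suc i'\<close> \<open>j = Suc j'\<close> by (simp add: L_def dot_Suc_shift)
    also have "\<dots> = A 0 (Suc i') * A 0 (Suc j') / a + S i' j'"
      using L' \<open>i' < n\<close> \<open>j' < n\<close> by (simp only: times_divide_times_eq sqrt_a(1))
    finally show ?thesis
      using \<open>i = Suc i'\<close> \<open>j = Suc j'\<close> by (simp add: S_def)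
  qed
  moreover have "L 0 k = 0" if "0 < k" for k
    using that by (cases k) (simp_all add: L_def)
  ultimately show ?case
    by (intro exI[of _ L]) (simp add: L_def a_def)
qed

definition helmert :: "nat \<Rightarrow> nat \<Rightarrow> nat \<Rightarrow> real" where
  "helmert d k l =
     (if k = 0 then 1 / sqrt (real d)
      else if l < k then 1 / sqrt (real k * (real k + 1))
      else if l = k then - real k / sqrt (real k * (real k + 1))
      else 0)"

lemma dot_helmert:
  assumes "0 < k" "k < d"
  shows "dot d (helmert d k) \<phi> = ((\<Sum>l<k. \<phi> l) - real k * \<phi> k) / sqrt (real k * (real k + 1))"
proof -
  let ?s = "sqrt (real k * (real k + 1))"
  have "dot d (helmert d k) \<phi> = (\<Sum>l<Suc k. helmert d k l * \<phi> l)"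
    unfolding dot_def using assms
    by (intro sum.mono_neutral_right) (auto simp: helmert_def)
  also have "\<dots> = (\<Sum>l<k. \<phi> l / ?s) - real k * \<phi> k / ?s"
    using assms by (simp add: helmert_def)
  finally show ?thesis by (simp add: sum_divide_distrib diff_divide_distrib)
qed

lemma helmert_orthonormal:
  assumes "k < d" "k' < d"
  shows "dot d (helmert d k) (helmert d k') = (if k = k' then 1 else 0)"
proof -
  have ordered: "dot d (helmert d k) (helmert d k') = (if k = k' then 1 else 0)"
    if "k < d" "k' < d" "k \<le> k'" for k k'
  proof -
    consider "k' = 0" | "k = 0" "0 < k'" | "0 < k" "k = k'" | "0 < k" "k < k'"
      using \<open>k \<le> k'\<close> by linarith
    then show ?thesis
    proof cases
      case 1
      then show ?thesis using that by (simp add: dot_def helmert_def)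
    next
      case 2
      have "helmert d k = (\<lambda>_. 1 / sqrt (real d))" using 2 by (simp add: helmert_def fun_eq_iff)
      then have "dot d (helmert d k) (helmert d k') = dot d (helmert d k') (\<lambda>_. 1 / sqrt (real d))"
        by (simp add: dot_commute)
      then show ?thesis using 2 that by (simp add: dot_helmert)
    next
      case 3
      have "real k + real k * real k > 0" using 3 by (simp add: add_pos_nonneg)
      then show ?thesis
        using 3 that by (simp add: dot_helmert helmert_def field_simps)
    next
      case 4
      have "(\<Sum>l<k. helmert d k' l) = real k / sqrt (real k' * (real k' + 1))"
        using 4 by (simp add: helmert_def)
      then show ?thesis using 4 that by (simp add: dot_helmert helmert_def)
    qed
  qed
  show ?thesis
  proof (cases "k \<le> k'")
    case True
    then show ?thesis using ordered assms by blast
  next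
    case False
    then show ?thesis using ordered[of k' k] assms by (simp add: dot_commute)
  qed
qed

lemma dot_orthonormal_combination:
  assumes "\<And>k k'. k < T \<Longrightarrow> k' < T \<Longrightarrow> dot d (g k) (g k') = (if k = k' then 1 else 0)"
  shows "dot d (\<lambda>l. \<Sum>k<T. a k * g k l) (\<lambda>l. \<Sum>k<T. b k * g k l) = dot T a b"
proof -
  have "dot d (\<lambda>l. \<Sum>k<T. a k * g k l) (\<lambda>l. \<Sum>k<T. b k * g k l)
      = (\<Sum>k<T. \<Sum>k'<T. a k * b k' * dot d (g k) (g k'))"
  proof -
    have "dot d (\<lambda>l. \<Sum>k<T. a k * g k l) (\<lambda>l. \<Sum>k<T. b k * g k l)
        = (\<Sum>l<d. \<Sum>k<T. \<Sum>k'<T. a k * b k' * (g k l * g k' l))"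
      unfolding dot_def sum_product by (simp add: mult_ac)
    also have "\<dots> = (\<Sum>k<T. \<Sum>k'<T. \<Sum>l<d. a k * b k' * (g k l * g k' l))"
      by (subst sum.swap) (simp add: sum.swap[of _ "{..<d}"])
    finally show ?thesis by (simp add: dot_def sum_distrib_left)
  qed
  also have "\<dots> = (\<Sum>k<T. \<Sum>k'<T. if k = k' then a k * b k' else 0)"
    using assms by (intro sum.cong) simp_all
  also have "\<dots> = dot T a b"
    by (simp add: dot_def)
  finally show ?thesis .
qed

lemma gram_vectors_along_ones:
  assumes "symmetric_matrix n A" "strictly_diagonally_dominant n A" "0 < n" "n \<le> d"
  shows "\<exists>v. (\<forall>i<n. \<forall>j<n. dot d (v i) (v j) = A i j) \<and>
              (\<forall>l<d. v 0 l = sqrt (A 0 0) / sqrt (real d))"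
proof -
  obtain L where L: "\<forall>i<n. \<forall>j<n. dot n (L i) (L j) = A i j"
    and L00: "L 0 0 = sqrt (A 0 0)" and L0k: "\<forall>k>0. L 0 k = 0"
    using strictly_diagonally_dominant_gram_factor[OF assms(1,2)] by blast
  define v where "v i l = (\<Sum>k<n. L i k * helmert d k l)" for i l
  have "dot d (v i) (v j) = A i j" if "i < n" "j < n" for i j
    using dot_orthonormal_combination[of n d "helmert d" "L i" "L j"] helmert_orthonormal
      assms(4) L that
    unfolding v_def by simp
  moreover have "v 0 l = sqrt (A 0 0) / sqrt (real d)" for l
  proof -
    obtain m where "n = Suc m" using assms(3) gr0_conv_Suc by blast
    then have "v 0 l = L 0 0 * helmert d 0 l + (\<Sum>k<m. L 0 (Suc k) * helmert d (Suc k) l)"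
      unfolding v_def by (simp only: sum.lessThan_Suc_shift)
    then show ?thesis using L00 L0k by (simp add: helmert_def)
  qed
  ultimately show ?thesis by blast
qed

lemma strictly_diagonally_dominant_bordered_perturbation:
  fixes X :: "nat \<Rightarrow> nat \<Rightarrow> real" and Z :: "nat \<Rightarrow> real"
  assumes "1 < d" "0 < \<beta>" "\<beta> \<le> 1"
    and X: "\<forall>i<t. \<forall>j<t. \<bar>X i j\<bar> \<le> \<beta> / (real t + 1)"
    and Z: "\<forall>i<t. \<bar>Z i\<bar> \<le> \<beta> / (real t + 1)"
  shows "strictly_diagonally_dominant (Suc t)
           (bordered (1 / real d) (\<lambda>j. Z j / real d) (\<lambda>j. Z j / real d)
              (\<lambda>i j. X i j + (if i = j then \<beta> else 0)))"
    (is "strictly_diagonally_dominant _ ?A")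
  unfolding strictly_diagonally_dominant_def
proof (intro allI impI)
  fix i assume i: "i < Suc t"
  define b where "b = \<beta> / (real t + 1)"
  have b_pos: "0 < b" using assms(2) by (simp add: b_def)
  have "real t + 1 \<noteq> 0" by linarith
  then have \<beta>_eq: "\<beta> = (real t + 1) * b" by (simp add: b_def)
  have d: "1 / real d < 1" "0 < real d" using assms(1) by simp_all
  show "(\<Sum>j\<in>{..<Suc t} - {i}. \<bar>?A i j\<bar>) < ?A i i"
  proof (cases i)
    case 0
    have "(\<Sum>j\<in>{..<Suc t} - {i}. \<bar>?A i j\<bar>) = (\<Sum>j<t. \<bar>Z j\<bar>) / real d"
      using 0 d by (simp add: sum_remove_0_shift sum_divide_distrib)
    also have "\<dots> \<le> real t * b / real d"
      using Z d by (intro divide_right_mono sum_bounded_above[where A = "{..<t}", simplified])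
        (auto simp: b_def)
    also have "\<dots> < 1 / real d"
      using \<beta>_eq assms(3) b_pos d by (intro divide_strict_right_mono) (auto simp: algebra_simps)
    finally show ?thesis using 0 by simp
  next
    case (Suc i')
    then have i': "i' < t" using i by simp
    have "(\<Sum>j\<in>{..<Suc t} - {i}. \<bar>?A i j\<bar>)
        = \<bar>Z i'\<bar> / real d + (\<Sum>j\<in>{..<t} - {i'}. \<bar>X i' j\<bar>)"
      using Suc d by (simp add: sum_remove_Suc_shift)
    also have "\<dots> \<le> b / real d + real (card ({..<t} - {i'})) * b"
      using X Z i' d by (intro add_mono divide_right_mono sum_bounded_above) (auto simp: b_def)
    also have "\<dots> < b + (real t - 1) * b"
    proof -
      have "b / real d < b" using b_pos assms(1) by (simp add: field_simps)
      moreover have "real (card ({..<t} - {i'})) = real t - 1" using i' by simp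
      ultimately show ?thesis by simp
    qed
    also have "\<dots> \<le> ?A i i"
    proof -
      have "\<bar>X i' i'\<bar> \<le> b" using X i' by (simp add: b_def)
      then show ?thesis using \<beta>_eq Suc by (simp add: algebra_simps abs_le_iff)
    qed
    finally show ?thesis .
  qed
qed

lemma gram_vectors_with_prescribed_sums:
  assumes "symmetric_matrix t G" "t < d"
    and "strictly_diagonally_dominant (Suc t)
           (bordered (1 / real d) (\<lambda>j. Z j / real d) (\<lambda>j. Z j / real d) G)"
  shows "\<exists>y. (\<forall>i<t. \<forall>j<t. dot d (y i) (y j) = G i j) \<and> (\<forall>i<t. (\<Sum>l<d. y i l) = Z i)"
proof -
  let ?A = "bordered (1 / real d) (\<lambda>j. Z j / real d) (\<lambda>j. Z j / real d) G"
  obtain v where gram: "\<forall>i<Suc t. \<forall>j<Suc t. dot d (v i) (v j) = ?A i j"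
    and ones: "\<forall>l<d. v 0 l = sqrt (?A 0 0) / sqrt (real d)"
    using gram_vectors_along_ones[of "Suc t" ?A d] symmetric_matrix_bordered[OF assms(1)] assms(2,3)
    by auto
  have "v 0 l = 1 / real d" if "l < d" for l
    using ones that by (simp add: real_sqrt_divide)
  then have "dot d (v 0) (v (Suc i)) = (\<Sum>l<d. v (Suc i) l) / real d" for i
    by (simp add: dot_def sum_divide_distrib)
  moreover have "dot d (v 0) (v (Suc i)) = Z i / real d" if "i < t" for i
    using gram that by simp
  ultimately have "(\<Sum>l<d. v (Suc i) l) = Z i" if "i < t" for i
    using that assms(2) by simp
  moreover have "dot d (v (Suc i)) (v (Suc j)) = G i j" if "i < t" "j < t" for i j
    using gram that by simp
  ultimately show ?thesis by (intro exI[of _ "\<lambda>i. v (Suc i)"]) blast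
qed

theorem mainTheorem10:
  fixes t k d :: nat and \<beta> :: real
    and X :: "nat \<Rightarrow> nat \<Rightarrow> real" and Z :: "nat \<Rightarrow> real"
  assumes "1 \<le> t" and "t \<le> k" and "d \<ge> k + 1"
    and "0 < \<beta>" and "\<beta> \<le> 1/2"
    and "\<forall>i<t. \<forall>j<t. X i j = X j i"
    and "\<forall>i<t. \<forall>j<t. \<bar>X i j\<bar> \<le> \<beta> / (real t + 1)"
    and "\<forall>i<t. \<bar>Z i\<bar> \<le> \<beta> / (real t + 1)"
  shows "\<exists>y :: nat \<Rightarrow> nat \<Rightarrow> real.
           (\<forall>i<t. \<forall>l<d. \<bar>y i l\<bar> \<le> 1) \<and>
           (\<forall>i<t. \<forall>j<t. i \<noteq> j \<longrightarrow> X i j = (\<Sum>l<d. y i l * y j l)) \<and>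
           (\<forall>i<t. X i i = (\<Sum>l<d. y i l * y i l) - \<beta>) \<and>
           (\<forall>i<t. Z i = (\<Sum>l<d. y i l))"
proof -
  define G where "G i j = X i j + (if i = j then \<beta> else 0)" for i j
  have "symmetric_matrix t G"
    using assms(6) by (simp add: symmetric_matrix_def G_def)
  moreover have "strictly_diagonally_dominant (Suc t)
                   (bordered (1 / real d) (\<lambda>j. Z j / real d) (\<lambda>j. Z j / real d) G)"
    unfolding G_def using assms by (intro strictly_diagonally_dominant_bordered_perturbation) auto
  ultimately obtain y where gram: "\<forall>i<t. \<forall>j<t. dot d (y i) (y j) = G i j"
    and sums: "\<forall>i<t. (\<Sum>l<d. y i l) = Z i"
    using gram_vectors_with_prescribed_sums[of t G d Z] assms(2,3) by auto
  have "dot d (y i) (y i) \<le> 1" if "i < t" for i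
  proof -
    have "\<beta> / (real t + 1) \<le> \<beta> / 2"
      using assms(1,4) by (intro divide_left_mono) auto
    moreover have "dot d (y i) (y i) = X i i + \<beta>" using gram that by (simp add: G_def)
    ultimately show ?thesis using assms(5,7) that by fastforce
  qed
  then have "\<forall>i<t. \<forall>l<d. \<bar>y i l\<bar> \<le> 1"
    using abs_le_one_if_dot_self_le_one by blast
  with gram sums show ?thesis
    by (intro exI[of _ y]) (auto simp: G_def dot_def)
qed

end
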